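(* Let $k>8$ be an integer, let $\theta=2\pi/k$, and let $\lambda>0$ be a real number such that $\cos\theta-\sin\theta>\frac{1}{\lambda+1}$. Let $G=(V,E)$ be a $\lambda$-civilized unit disk graph, and let $YY_k$ be the Yao-Yao graph of $G$ (defined in the context). Then for every real $t\ge \frac{\lambda}{(\lambda+1)(\cos\theta-\sin\theta)-1}$, the graph $YY_k$ is a length $t$-spanner of $G$.
   Context: Unit disk graph (UDG): $V$ is a finite set of points in the Euclidean plane and $E=\{uv: u,v\in V,\ u\neq v,\ |uv|\le 1\}$, where $|uv|$ is Euclidean distance; $G$ is assumed connected. $G$ is $\lambda$-civilized if no two nodes of $V$ are at distance smaller than $\lambda$. A subgraph $H$ of $G$ on the same vertex set is a length $t$-spanner of $G$ if for all $u,v\in V$ the length (sum of Euclidean edge lengths) of a shortest $uv$-path in $H$ is at most $t$ times the length of a shortest $uv$-path in $G$. Cones: for each point $u$, the plane is partitioned into $k$ cones with apex $u$, each of angle $\theta=2\pi/k$, bounded by $k$ equally spaced rays from $u$ (the same ray directions at every node); each cone is half-open, half-closed. $K_u(v)$ denotes the cone with apex $u$ containing $v$. An edge $uw$ incident to $u$ lies in a cone $K_u$ if $w\in K_u$. Identifiers: each node has a distinct identifier $\mathrm{ID}(u)$. For a directed edge $\overrightarrow{uv}$, $\mathrm{ID}(\overrightarrow{uv})=(|uv|,\mathrm{ID}(u),\mathrm{ID}(v))$, compared lexicographically; for an undirected edge, $\mathrm{ID}(uv)=\min\{\mathrm{ID}(\overrightarrow{uv}),\mathrm{ID}(\overrightarrow{vu})\}$.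 Yao step: $E_Y=\emptyset$; for each node $u$ and each cone $K_u$ such that some edge of $E$ incident to $u$ lies in $K_u$, pick the edge $uv$ of $E$ lying in $K_u$ with lowest $\mathrm{ID}(uv)$ and add the directed edge $\overrightarrow{uv}$ to $E_Y$. The Yao graph is $Y_k=(V,E_Y)$. Reverse Yao step: start with $E_{YY}=E_Y$; for each node $v$ and each cone $K_v$, among all edges $\overrightarrow{uv}\in E_Y$ with sink $v$ and $u\in K_v$, delete all from $E_{YY}$ except the one with smallest ID. The Yao-Yao graph $YY_k=(V,E_{YY})$ is viewed as an undirected graph. *)

theory Defs
  imports Complex_Main
begin

text \<open>Points of the Euclidean plane are modelled as complex numbers; dist is Euclidean distance.\<close>

definition udg_edges :: "complex set \<Rightarrow> (complex \<times> complex) set" where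
  "udg_edges V = {(u, v). u \<in> V \<and> v \<in> V \<and> u \<noteq> v \<and> dist u v \<le> 1}"

definition civilized :: "real \<Rightarrow> complex set \<Rightarrow> bool" where
  "civilized lam V \<longleftrightarrow> (\<forall>u\<in>V. \<forall>v\<in>V. u \<noteq> v \<longrightarrow> lam \<le> dist u v)"

fun is_walk :: "(complex \<times> complex) set \<Rightarrow> complex list \<Rightarrow> bool" where
  "is_walk E [] = False"
| "is_walk E [x] = True"
| "is_walk E (x # y # xs) = ((x, y) \<in> E \<and> is_walk E (y # xs))"

definition walk_from_to :: "(complex \<times> complex) set \<Rightarrow> complex list \<Rightarrow> complex \<Rightarrow> complex \<Rightarrow> bool" where
  "walk_from_to E p u v \<longleftrightarrow> is_walk E p \<and> hd p = u \<and> last p = v"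

fun walk_len :: "complex list \<Rightarrow> real" where
  "walk_len [] = 0"
| "walk_len [x] = 0"
| "walk_len (x # y # xs) = dist x y + walk_len (y # xs)"

definition connected_on :: "complex set \<Rightarrow> (complex \<times> complex) set \<Rightarrow> bool" where
  "connected_on V E \<longleftrightarrow> (\<forall>u\<in>V. \<forall>v\<in>V. \<exists>p. walk_from_to E p u v)"

text \<open>Length of a shortest uv-path (infimum of walk lengths; attained since simple paths suffice).\<close>
definition sp_len :: "(complex \<times> complex) set \<Rightarrow> complex \<Rightarrow> complex \<Rightarrow> real" where
  "sp_len E u v = Inf (walk_len ` {p. walk_from_to E p u v})"

definition length_spanner :: "complex set \<Rightarrow> (complex \<times> complex) set \<Rightarrow> (complex \<times> complex) set \<Rightarrow> real \<Rightarrow> bool" where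
  "length_spanner V H E t \<longleftrightarrow>
     (\<forall>u\<in>V. \<forall>v\<in>V. (\<exists>p. walk_from_to H p u v) \<and> sp_len H u v \<le> t * sp_len E u v)"

text \<open>Cones: k cones of angle 2pi/k, bounded by rays at directions alpha + i*2pi/k (same at every node).
  The cone with apex u containing v has index floor(k * frac((arg(v-u) - alpha)/(2pi))),
  i.e. cone i is the half-open angular range [alpha + i theta, alpha + (i+1) theta).\<close>
definition cone_idx :: "nat \<Rightarrow> real \<Rightarrow> complex \<Rightarrow> complex \<Rightarrow> int" where
  "cone_idx k alpha u v = \<lfloor>real k * frac ((Arg (v - u) - alpha) / (2 * pi))\<rfloor>"

definition lex_le :: "real \<times> nat \<times> nat \<Rightarrow> real \<times> nat \<times> nat \<Rightarrow> bool" where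
  "lex_le a b \<longleftrightarrow> (case a of (d1, i1, j1) \<Rightarrow> case b of (d2, i2, j2) \<Rightarrow>
      d1 < d2 \<or> (d1 = d2 \<and> (i1 < i2 \<or> (i1 = i2 \<and> j1 \<le> j2))))"

definition lex_min :: "real \<times> nat \<times> nat \<Rightarrow> real \<times> nat \<times> nat \<Rightarrow> real \<times> nat \<times> nat" where
  "lex_min a b = (if lex_le a b then a else b)"

definition dir_edge_id :: "(complex \<Rightarrow> nat) \<Rightarrow> complex \<Rightarrow> complex \<Rightarrow> real \<times> nat \<times> nat" where
  "dir_edge_id ID u v = (dist u v, ID u, ID v)"

definition edge_id :: "(complex \<Rightarrow> nat) \<Rightarrow> complex \<Rightarrow> complex \<Rightarrow> real \<times> nat \<times> nat" where
  "edge_id ID u v = lex_min (dir_edge_id ID u v) (dir_edge_id ID v u)"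

definition yao_edges :: "nat \<Rightarrow> real \<Rightarrow> (complex \<Rightarrow> nat) \<Rightarrow> complex set \<Rightarrow> (complex \<times> complex) set" where
  "yao_edges k alpha ID V = {(u, v). (u, v) \<in> udg_edges V \<and>
     (\<forall>w. (u, w) \<in> udg_edges V \<and> cone_idx k alpha u w = cone_idx k alpha u v
          \<longrightarrow> lex_le (edge_id ID u v) (edge_id ID u w))}"

definition yao_yao_dir :: "nat \<Rightarrow> real \<Rightarrow> (complex \<Rightarrow> nat) \<Rightarrow> complex set \<Rightarrow> (complex \<times> complex) set" where
  "yao_yao_dir k alpha ID V = {(u, v). (u, v) \<in> yao_edges k alpha ID V \<and>
     (\<forall>w. (w, v) \<in> yao_edges k alpha ID V \<and> cone_idx k alpha v w = cone_idx k alpha v u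
          \<longrightarrow> lex_le (edge_id ID u v) (edge_id ID w v))}"

definition yao_yao_edges :: "nat \<Rightarrow> real \<Rightarrow> (complex \<Rightarrow> nat) \<Rightarrow> complex set \<Rightarrow> (complex \<times> complex) set" where
  "yao_yao_edges k alpha ID V = yao_yao_dir k alpha ID V \<union> (yao_yao_dir k alpha ID V)\<inverse>"

end

theory Submission
  imports Defs "HOL-Library.Product_Lexorder"
begin

text \<open>
  Induct on the edges of the unit disk graph ordered by ID: every edge uv of length at most 1
  is joined in YY by a walk of length at most t|uv| - (t - 1)\<lambda>.  If uv is not kept by the
  Yao-Yao construction, then (possibly after swapping u and v) some edge uw with lower ID lies in
  the cone of u containing v.  Then |uw| \<le> |uv|, and since the angle wuv is at most \<theta>,
  |wv| \<le> |uv| - (cos \<theta> - sin \<theta>)|uw| < |uv|, so uw and wv are smaller edges.  Concatenating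
  their walks costs t|uv| - (t - 1)\<lambda> + [t(1 - (cos \<theta> - sin \<theta>))|uw| - (t - 1)\<lambda>], and the
  bracket is non-positive because |uw| \<le> 1 and t(1 - (cos \<theta> - sin \<theta>)) \<le> (t - 1)\<lambda>, which is
  where the bound on t comes from.  Concatenating along shortest paths of G gives the spanner
  property.
\<close>

lemma lex_le_iff_le: "lex_le a b \<longleftrightarrow> a \<le> b"
  by (cases a; cases b) (auto simp: lex_le_def)

lemma lex_min_eq_min: "lex_min a b = min a b"
  unfolding lex_min_def lex_le_iff_le min_def ..

lemma edge_id_commute: "edge_id ID u v = edge_id ID v u"
  unfolding edge_id_def lex_min_eq_min by (simp add: min.commute)

lemma fst_edge_id [simp]: "fst (edge_id ID u v) = dist u v"
  unfolding edge_id_def lex_min_eq_min dir_edge_id_def by (simp add: min_def dist_commute)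

lemma dist_le_if_edge_id_less: "edge_id ID u v < edge_id ID x y \<Longrightarrow> dist u v \<le> dist x y"
  using fst_edge_id[of ID u v] fst_edge_id[of ID x y] by (auto simp: less_prod_def')

lemma edge_id_less_if_dist_less: "dist u v < dist x y \<Longrightarrow> edge_id ID u v < edge_id ID x y"
  by (simp add: less_prod_def')

lemma sym_udg_edges: "sym (udg_edges V)"
  unfolding udg_edges_def sym_def by (auto simp: dist_commute)

lemma sym_yao_yao_edges: "sym (yao_yao_edges k alpha ID V)"
  unfolding yao_yao_edges_def sym_def by auto

lemma udg_edge_not_in_yao_yao_dirE:
  assumes "(u, v) \<in> udg_edges V" "(u, v) \<notin> yao_yao_dir k alpha ID V"
  obtains w where "(u, w) \<in> udg_edges V" "cone_idx k alpha u w = cone_idx k alpha u v"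
      "edge_id ID u w < edge_id ID u v"
    | w where "(v, w) \<in> udg_edges V" "cone_idx k alpha v w = cone_idx k alpha v u"
      "edge_id ID v w < edge_id ID v u"
  using assms sym_udg_edges[of V]
  unfolding yao_yao_dir_def yao_edges_def lex_le_iff_le not_le[symmetric]
  by (auto simp: edge_id_commute[of ID _ v] sym_def)

definition walk_within :: "(complex \<times> complex) set \<Rightarrow> complex \<Rightarrow> complex \<Rightarrow> real \<Rightarrow> bool" where
  "walk_within H u v l \<longleftrightarrow> (\<exists>p. walk_from_to H p u v \<and> walk_len p \<le> l)"

lemma walk_len_nonneg: "0 \<le> walk_len p"
  by (induction p rule: walk_len.induct) auto

lemma is_walk_append:
  "is_walk H p \<Longrightarrow> is_walk H q \<Longrightarrow> last p = hd q \<Longrightarrow>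
   is_walk H (p @ tl q) \<and> walk_len (p @ tl q) = walk_len p + walk_len q"
proof (induction p rule: walk_len.induct)
  case (2 x)
  then show ?case by (cases q) auto
qed auto

lemma walk_within_refl: "walk_within H u u 0"
  unfolding walk_within_def walk_from_to_def by (intro exI[of _ "[u]"]) simp

lemma walk_within_edge: "(u, v) \<in> H \<Longrightarrow> walk_within H u v (dist u v)"
  unfolding walk_within_def walk_from_to_def by (intro exI[of _ "[u, v]"]) simp

lemma walk_within_mono: "walk_within H u v l \<Longrightarrow> l \<le> l' \<Longrightarrow> walk_within H u v l'"
  unfolding walk_within_def by force

lemma walk_within_trans:
  assumes "walk_within H u v l" "walk_within H v w l'"
  shows "walk_within H u w (l + l')"
proof -
  obtain p q where p: "walk_from_to H p u v" "walk_len p \<le> l"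
    and q: "walk_from_to H q v w" "walk_len q \<le> l'"
    using assms unfolding walk_within_def by blast
  have "p \<noteq> []" "q \<noteq> []" using p(1) q(1) unfolding walk_from_to_def by auto
  then have "walk_from_to H (p @ tl q) u w \<and> walk_len (p @ tl q) = walk_len p + walk_len q"
    using p(1) q(1) is_walk_append[of H p q] unfolding walk_from_to_def by (cases q) auto
  then show ?thesis
    unfolding walk_within_def using p(2) q(2) by (intro exI[of _ "p @ tl q"]) auto
qed

lemma walk_within_sym:
  assumes "sym H" "walk_within H u v l"
  shows "walk_within H v u l"
proof -
  have "is_walk H (rev p) \<and> walk_len (rev p) = walk_len p" if "is_walk H p" for p
    using that
  proof (induction p rule: walk_len.induct)
    case (3 x y xs)
    then have "is_walk H [y, x]" using \<open>sym H\<close> by (auto dest: symD)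
    with 3 show ?case
      using is_walk_append[of H "rev (y # xs)" "[y, x]"] by (simp add: dist_commute)
  qed auto
  with assms(2) show ?thesis
    unfolding walk_within_def walk_from_to_def by (metis hd_rev last_rev rev_is_Nil_conv is_walk.simps(1))
qed

lemma walk_within_if_walk:
  assumes "\<And>x y. (x, y) \<in> E \<Longrightarrow> walk_within H x y (t * dist x y)" "walk_from_to E p u v"
  shows "walk_within H u v (t * walk_len p)"
proof -
  have "is_walk E p \<Longrightarrow> walk_within H (hd p) (last p) (t * walk_len p)"
  proof (induction p rule: walk_len.induct)
    case (3 x y xs)
    then have "walk_within H x (last (y # xs)) (t * dist x y + t * walk_len (y # xs))"
      using assms(1) walk_within_trans by fastforce
    then show ?case by (simp add: distrib_left)
  qed (auto simp: walk_within_refl)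
  with assms(2) show ?thesis unfolding walk_from_to_def by blast
qed

lemma length_spanner_if_edges_stretched:
  assumes "connected_on V E" "0 < t"
    and "\<And>x y. (x, y) \<in> E \<Longrightarrow> walk_within H x y (t * dist x y)"
  shows "length_spanner V H E t"
  unfolding length_spanner_def
proof (intro ballI conjI)
  fix u v assume "u \<in> V" "v \<in> V"
  then obtain p where p: "walk_from_to E p u v"
    using assms(1) unfolding connected_on_def by blast
  have stretched: "\<exists>q. walk_from_to H q u v \<and> walk_len q \<le> t * walk_len p'"
    if "walk_from_to E p' u v" for p'
    using walk_within_if_walk[OF assms(3) that] unfolding walk_within_def .
  then show "\<exists>q. walk_from_to H q u v" using p by blast
  have "sp_len H u v / t \<le> sp_len E u v"
    unfolding sp_len_def[of E]
  proof (rule cInf_greatest)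
    fix l assume "l \<in> walk_len ` {p. walk_from_to E p u v}"
    then obtain p' where p': "walk_from_to E p' u v" "l = walk_len p'" by blast
    obtain q where q: "walk_from_to H q u v" "walk_len q \<le> t * l"
      using stretched[OF p'(1)] p'(2) by blast
    have "sp_len H u v \<le> walk_len q"
      unfolding sp_len_def using q(1) walk_len_nonneg by (intro cInf_lower bdd_belowI) auto
    with q(2) \<open>0 < t\<close> show "sp_len H u v / t \<le> l" by (simp add: divide_le_eq mult.commute)
  qed (use p in blast)
  with \<open>0 < t\<close> show "sp_len H u v \<le> t * sp_len E u v" by (simp add: divide_le_eq mult.commute)
qed

lemma cos_Arg_diff_ge_if_same_cone:
  assumes "2 \<le> k" "cone_idx k alpha u v = cone_idx k alpha u w"
  shows "cos (2 * pi / k) \<le> cos (Arg (v - u) - Arg (w - u))"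
proof -
  define x1 where "x1 = (Arg (v - u) - alpha) / (2 * pi)"
  define x2 where "x2 = (Arg (w - u) - alpha) / (2 * pi)"
  have "\<bar>real k * frac x1 - real k * frac x2\<bar> < 1"
    using assms(2) unfolding cone_idx_def x1_def[symmetric] x2_def[symmetric] by linarith
  then have "real k * \<bar>frac x1 - frac x2\<bar> < 1"
    by (simp add: right_diff_distrib[symmetric] abs_mult)
  then have frac_close: "\<bar>frac x1 - frac x2\<bar> \<le> 1 / k"
    using assms(1) by (simp add: field_simps)
  define y where "y = 2 * pi * (frac x1 - frac x2)"
  define n where "n = \<lfloor>x1\<rfloor> - \<lfloor>x2\<rfloor>"
  have "Arg (v - u) - Arg (w - u) = y + (2 * pi) * of_int n"
    unfolding y_def n_def x1_def x2_def frac_def by (simp add: field_simps)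
  then have cos_eq: "cos (Arg (v - u) - Arg (w - u)) = cos \<bar>y\<bar>"
    by (simp add: cos_add)
  have "\<bar>y\<bar> = 2 * pi * \<bar>frac x1 - frac x2\<bar>" unfolding y_def by (simp add: abs_mult)
  also have "\<dots> \<le> 2 * pi * (1 / k)" using frac_close by (intro mult_left_mono) auto
  finally have "\<bar>y\<bar> \<le> 2 * pi / k" by simp
  moreover have "2 * pi / k \<le> pi" using assms(1) by (simp add: field_simps)
  ultimately show ?thesis unfolding cos_eq by (intro cos_monotone_0_pi_le) auto
qed

lemma cos_minus_sin_le_one:
  assumes "2 \<le> k"
  shows "cos (2 * pi / k) - sin (2 * pi / k) \<le> 1"
proof -
  have "0 \<le> sin (2 * pi / k)"
    using assms pi_gt_zero by (intro sin_ge_zero) (auto simp: field_simps)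
  then show ?thesis using cos_le_one[of "2 * pi / k"] by linarith
qed

lemma Re_cnj_mult_eq_cos_Arg_diff:
  "z1 \<noteq> 0 \<Longrightarrow> z2 \<noteq> 0 \<Longrightarrow> Re (cnj z1 * z2) = norm z1 * norm z2 * cos (Arg z1 - Arg z2)"
  by (simp add: cos_diff cos_Arg sin_Arg field_simps)

text \<open>For c = cos \<phi> and s = sin \<phi>, the last hypothesis says that the angle between z1 and z2
  is at most \<phi>.\<close>
lemma norm_diff_le_if_Re_cnj_mult_ge:
  fixes z1 z2 :: complex and c s :: real
  assumes "norm z1 \<le> norm z2" "0 \<le> c" "0 \<le> s" "c\<^sup>2 + s\<^sup>2 = 1"
    and "c * norm z1 * norm z2 \<le> Re (cnj z1 * z2)"
  shows "norm (z1 - z2) \<le> norm z2 - (c - s) * norm z1"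
proof -
  define r d where "r = norm z1" and "d = norm z2"
  have "r \<le> d" "0 \<le> r" using assms(1) unfolding r_def d_def by auto
  have "c\<^sup>2 \<le> 1" using assms(4) zero_le_power2[of s] by linarith
  then have "c \<le> 1" using power2_le_imp_le[of c 1] by simp
  then have "c * r \<le> d" using \<open>r \<le> d\<close> \<open>0 \<le> r\<close> by (meson mult_left_le_one_le order_trans assms(2))
  have "(norm (z1 - z2))\<^sup>2 = r\<^sup>2 + d\<^sup>2 - 2 * Re (cnj z1 * z2)"
    unfolding r_def d_def cmod_power2 by (simp add: power2_eq_square algebra_simps)
  also have "\<dots> \<le> r\<^sup>2 + d\<^sup>2 - 2 * c * r * d" using assms(5) unfolding r_def d_def by simp
  also have "\<dots> = (d - (c - s) * r)\<^sup>2 - 2 * s * r * (d - c * r) - (c\<^sup>2 + s\<^sup>2 - 1) * r\<^sup>2"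
    by (simp add: power2_eq_square algebra_simps)
  also have "\<dots> = (d - (c - s) * r)\<^sup>2 - 2 * s * r * (d - c * r)"
    using assms(4) by simp
  also have "\<dots> \<le> (d - (c - s) * r)\<^sup>2"
    using assms(3) \<open>0 \<le> r\<close> \<open>c * r \<le> d\<close> by simp
  finally have "(norm (z1 - z2))\<^sup>2 \<le> (d - (c - s) * r)\<^sup>2" .
  moreover have "0 \<le> d - (c - s) * r"
    using \<open>c \<le> 1\<close> assms(3) \<open>r \<le> d\<close> \<open>0 \<le> r\<close> mult_right_mono[of "c - s" 1 r] by simp
  ultimately show ?thesis unfolding r_def d_def by (rule power2_le_imp_le)
qed

lemma dist_le_if_same_cone:
  assumes "4 \<le> k" "u \<noteq> v" "u \<noteq> w" "cone_idx k alpha u w = cone_idx k alpha u v"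
    and "dist u w \<le> dist u v"
  shows "dist w v \<le> dist u v - (cos (2 * pi / k) - sin (2 * pi / k)) * dist u w"
proof -
  have "2 * pi / k \<le> pi / 2" using assms(1) pi_gt_zero by (simp add: field_simps)
  moreover have "0 \<le> 2 * pi / k" by simp
  ultimately have "0 \<le> cos (2 * pi / k)" "0 \<le> sin (2 * pi / k)"
    using pi_gt_zero by (intro cos_ge_zero sin_ge_zero; linarith)+
  moreover have "cos (2 * pi / k) * norm (w - u) * norm (v - u) \<le> Re (cnj (w - u) * (v - u))"
    using cos_Arg_diff_ge_if_same_cone[of k alpha u w v] assms(1-4)
      Re_cnj_mult_eq_cos_Arg_diff[of "w - u" "v - u"]
    by (simp add: mult_left_mono mult.commute mult.left_commute)
  ultimately have "norm ((w - u) - (v - u)) \<le> norm (v - u) - (cos (2 * pi / k) - sin (2 * pi / k)) * norm (w - u)"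
    using assms(5) by (intro norm_diff_le_if_Re_cnj_mult_ge) (auto simp: dist_norm norm_minus_commute)
  then show ?thesis by (simp add: dist_norm norm_minus_commute)
qed

lemma finite_ranked_induct [consumes 2, case_names less]:
  fixes g :: "'a \<Rightarrow> 'b::order"
  assumes "finite A" "x \<in> A"
    and step: "\<And>x. x \<in> A \<Longrightarrow> (\<And>y. y \<in> A \<Longrightarrow> g y < g x \<Longrightarrow> P y) \<Longrightarrow> P x"
  shows "P x"
  using assms(2)
proof (induction "card {y \<in> A. g y < g x}" arbitrary: x rule: less_induct)
  case less
  show ?case
  proof (rule step[OF less.prems])
    fix y assume "y \<in> A" "g y < g x"
    then have "{z \<in> A. g z < g y} \<subset> {z \<in> A. g z < g x}" by (auto dest: less_trans)
    then have "card {z \<in> A. g z < g y} < card {z \<in> A. g z < g x}"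
      using assms(1) by (intro psubset_card_mono) auto
    with \<open>y \<in> A\<close> less.hyps show "P y" by blast
  qed
qed

context
  fixes k :: nat and lam t alpha :: real and V :: "complex set" and ID :: "complex \<Rightarrow> nat"
  assumes four_cones: "4 \<le> k"
    and finite_V: "finite V"
    and civilized_V: "civilized lam V"
    and gap_pos: "0 < cos (2 * pi / k) - sin (2 * pi / k)"
    and one_le_t: "1 \<le> t"
    and slack: "t * (1 - (cos (2 * pi / k) - sin (2 * pi / k))) \<le> (t - 1) * lam"
begin

lemma walk_within_via_cone_neighbour:
  assumes uv: "(u, v) \<in> udg_edges V" and uw: "(u, w) \<in> udg_edges V"
    and cone: "cone_idx k alpha u w = cone_idx k alpha u v"
    and less: "edge_id ID u w < edge_id ID u v"
    and IH: "\<And>x y. (x, y) \<in> udg_edges V \<Longrightarrow> edge_id ID x y < edge_id ID u v \<Longrightarrow>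
      walk_within (yao_yao_edges k alpha ID V) x y (t * dist x y - (t - 1) * lam)"
  shows "walk_within (yao_yao_edges k alpha ID V) u v (t * dist u v - (t - 1) * lam)"
proof -
  define gap where "gap = cos (2 * pi / k) - sin (2 * pi / k)"
  have uw_props: "u \<noteq> w" "dist u w \<le> 1" and "u \<noteq> v" "dist u v \<le> 1"
    using uv uw unfolding udg_edges_def by auto
  have wv_le: "dist w v \<le> dist u v - gap * dist u w"
    unfolding gap_def using dist_le_if_same_cone[OF four_cones \<open>u \<noteq> v\<close> \<open>u \<noteq> w\<close> cone]
      dist_le_if_edge_id_less[OF less] by blast
  moreover have "0 < gap * dist u w" using gap_pos \<open>u \<noteq> w\<close> unfolding gap_def by simp
  ultimately have "dist w v < dist u v" by linarith
  moreover have "w \<noteq> v" using less by auto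
  ultimately have wv: "(w, v) \<in> udg_edges V" "edge_id ID w v < edge_id ID u v"
    using uv uw \<open>dist u v \<le> 1\<close> by (auto simp: udg_edges_def edge_id_less_if_dist_less)
  have walk_uwv: "walk_within (yao_yao_edges k alpha ID V) u v
      ((t * dist u w - (t - 1) * lam) + (t * dist w v - (t - 1) * lam))"
    using IH[OF uw less] IH[OF wv] by (rule walk_within_trans)
  have "0 \<le> 1 - gap" using cos_minus_sin_le_one four_cones unfolding gap_def by simp
  then have "0 \<le> t * (1 - gap)" using one_le_t by simp
  then have "t * dist u w - t * gap * dist u w \<le> t * (1 - gap)"
    using mult_left_le[OF uw_props(2), of "t * (1 - gap)"] by (simp add: algebra_simps)
  moreover have "t * dist w v \<le> t * dist u v - t * gap * dist u w"
    using mult_left_mono[OF wv_le, of t] one_le_t by (simp add: algebra_simps)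
  ultimately have "(t * dist u w - (t - 1) * lam) + (t * dist w v - (t - 1) * lam)
      \<le> t * dist u v - (t - 1) * lam"
    using slack unfolding gap_def[symmetric] by linarith
  with walk_uwv show ?thesis by (rule walk_within_mono)
qed

lemma walk_within_for_yao_yao_dir_edge:
  assumes "(u, v) \<in> yao_yao_dir k alpha ID V"
  shows "walk_within (yao_yao_edges k alpha ID V) u v (t * dist u v - (t - 1) * lam)"
proof (rule walk_within_mono)
  show "walk_within (yao_yao_edges k alpha ID V) u v (dist u v)"
    using assms by (intro walk_within_edge) (simp add: yao_yao_edges_def)
  have "lam \<le> dist u v"
    using assms civilized_V
    unfolding yao_yao_dir_def yao_edges_def civilized_def udg_edges_def by auto
  then show "dist u v \<le> t * dist u v - (t - 1) * lam"
    using mult_right_mono[of lam "dist u v" "t - 1"] one_le_t by (simp add: algebra_simps)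
qed

lemma walk_within_for_udg_edge:
  assumes "(u, v) \<in> udg_edges V"
  shows "walk_within (yao_yao_edges k alpha ID V) u v (t * dist u v - (t - 1) * lam)"
proof -
  have fin: "finite (udg_edges V)"
    by (rule finite_subset[of _ "V \<times> V"]) (auto simp: udg_edges_def finite_V)
  have "case e of (u, v) \<Rightarrow>
      walk_within (yao_yao_edges k alpha ID V) u v (t * dist u v - (t - 1) * lam)"
    if "e \<in> udg_edges V" for e
    using fin that
  proof (induction e rule: finite_ranked_induct[where g = "\<lambda>(x, y). edge_id ID x y"])
    case (less e)
    obtain u v where e: "e = (u, v)" by force
    with less(1) have uv: "(u, v) \<in> udg_edges V" by simp
    have IH: "walk_within (yao_yao_edges k alpha ID V) x y (t * dist x y - (t - 1) * lam)"
      if "(x, y) \<in> udg_edges V" "edge_id ID x y < edge_id ID u v" for x y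
      using less(2)[of "(x, y)"] that e by simp
    show ?case
    proof (cases "(u, v) \<in> yao_yao_dir k alpha ID V")
      case True
      then show ?thesis unfolding e by (simp add: walk_within_for_yao_yao_dir_edge)
    next
      case False
      show ?thesis
      proof (rule udg_edge_not_in_yao_yao_dirE[OF uv False])
        fix w assume "(u, w) \<in> udg_edges V" "cone_idx k alpha u w = cone_idx k alpha u v"
          "edge_id ID u w < edge_id ID u v"
        from walk_within_via_cone_neighbour[OF uv this IH] show ?thesis unfolding e by simp
      next
        fix w assume "(v, w) \<in> udg_edges V" "cone_idx k alpha v w = cone_idx k alpha v u"
          "edge_id ID v w < edge_id ID v u"
        moreover have "(v, u) \<in> udg_edges V" using uv sym_udg_edges by (auto dest: symD)
        ultimately have "walk_within (yao_yao_edges k alpha ID V) v u (t * dist v u - (t - 1) * lam)"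
          using walk_within_via_cone_neighbour IH by (metis edge_id_commute)
        then show ?thesis
          unfolding e using sym_yao_yao_edges walk_within_sym by (simp add: dist_commute)
      qed
    qed
  qed
  with assms show ?thesis by force
qed

end

lemma stretch_factor_bounds:
  fixes lam d t :: real
  assumes "0 < lam" "d \<le> 1" "1 / (lam + 1) < d" "lam / ((lam + 1) * d - 1) \<le> t"
  shows "1 \<le> t" "t * (1 - d) \<le> (t - 1) * lam"
proof -
  have "0 < (lam + 1) * d - 1" using assms(1,3) by (simp add: field_simps)
  then have tD: "lam \<le> t * ((lam + 1) * d - 1)" using assms(4) by (simp add: pos_divide_le_eq)
  have "lam * d \<le> lam" using assms(1,2) by (simp add: mult_left_le)
  then have "(lam + 1) * d - 1 \<le> lam" using assms(2) by (simp add: algebra_simps)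
  with tD have "1 * ((lam + 1) * d - 1) \<le> t * ((lam + 1) * d - 1)" by simp
  then show "1 \<le> t" using \<open>0 < (lam + 1) * d - 1\<close> by (rule mult_right_le_imp_le)
  have "0 \<le> t * lam * (1 - d)" using \<open>1 \<le> t\<close> assms(1,2) by simp
  with tD show "t * (1 - d) \<le> (t - 1) * lam" by (simp add: algebra_simps)
qed

theorem theorem1:
  fixes k :: nat and lam t alpha :: real and V :: "complex set" and ID :: "complex \<Rightarrow> nat"
  assumes "k > 8"
    and "lam > 0"
    and "cos (2 * pi / k) - sin (2 * pi / k) > 1 / (lam + 1)"
    and "finite V"
    and "inj_on ID V"
    and "connected_on V (udg_edges V)"
    and "civilized lam V"
    and "t \<ge> lam / ((lam + 1) * (cos (2 * pi / k) - sin (2 * pi / k)) - 1)"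
  shows "length_spanner V (yao_yao_edges k alpha ID V) (udg_edges V) t"
proof -
  have gap_le_1: "cos (2 * pi / k) - sin (2 * pi / k) \<le> 1"
    using assms(1) by (intro cos_minus_sin_le_one) simp
  have "0 < 1 / (lam + 1)" using assms(2) by simp
  then have gap_pos: "0 < cos (2 * pi / k) - sin (2 * pi / k)" using assms(3) by linarith
  note t_bounds = stretch_factor_bounds[OF assms(2) gap_le_1 assms(3,8)]
  have "walk_within (yao_yao_edges k alpha ID V) x y (t * dist x y)"
    if "(x, y) \<in> udg_edges V" for x y
  proof (rule walk_within_mono)
    show "walk_within (yao_yao_edges k alpha ID V) x y (t * dist x y - (t - 1) * lam)"
      using assms(1,4,7) gap_pos t_bounds that by (intro walk_within_for_udg_edge) auto
    show "t * dist x y - (t - 1) * lam \<le> t * dist x y"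
      using t_bounds(1) assms(2) by simp
  qed
  with assms(6) t_bounds(1) show ?thesis by (intro length_spanner_if_edges_stretched) auto
qed

end
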